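(* Let $d,N\ge1$, $\epsilon\in(0,1]$, $\delta\ge0$ with $C_d\delta<1$, and $\beta\in(0,1/2]$ with $N\ge\ln(2d/\beta)$. Let $x(1),\dots,x(N)\in[-1,1]^d$ and let $x^*(i)=\mathcal{M}(x(i))$ be obtained by applying Mechanism-1 (with parameters $\epsilon,\delta$) independently to each $x(i)$. For $j\in\{1,\dots,d\}$ put $Z_j=\frac1N\sum_{i=1}^N x^*_j(i)$ and $X_j=\frac1N\sum_{i=1}^N x_j(i)$. Then with probability at least $1-\beta$, $$\max_{j\in\{1,\dots,d\}}|Z_j-X_j|=O\!\left(\frac{\sqrt{d\log(d/\beta)}}{(\epsilon+2^d\delta)\sqrt N}\right),$$ where the implied constant is absolute (independent of $d,N,\epsilon,\delta,\beta$ and the data).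
   Context: Let $C_d=2^{d-1}$ if $d$ is odd and $C_d=2^{d-1}-\frac12\binom{d}{d/2}$ if $d$ is even. For $B>0$ and $v\in\{-1,1\}^d$ let $T^+(v)=\{y\in\{-B,B\}^d: y\cdot v>0\}$, $T^-(v)=\{y\in\{-B,B\}^d: y\cdot v\le 0\}$. For $\alpha\in[0,1]$, $\mathcal{M}_{\alpha,B}$ takes $x\in[-1,1]^d$, samples $V\in\{-1,1\}^d$ with independent coordinates $\mathbb{P}[V_j=\pm1]=\frac12\pm\frac12x_j$, independently samples $u\in\{0,1\}$ with $\mathbb{P}[u=1]=\alpha$, and outputs a uniformly random element of $T^+(V)$ if $u=1$ and of $T^-(V)$ if $u=0$. Mechanism-1 with parameters $\epsilon>0,\delta\ge0$ is $\mathcal{M}=\mathcal{M}_{\alpha_{\epsilon,\delta},B_{\epsilon,\delta}}$ where $\alpha_{\epsilon,\delta}=\frac{e^\epsilon+C_d\delta}{e^\epsilon+1}$ if $d$ is odd and $\alpha_{\epsilon,\delta}=\frac{e^\epsilon C_d+\delta C_d(2^d-C_d)}{(e^\epsilon-1)C_d+2^d}$ if $d$ is even, and $B_{\epsilon,\delta}=\frac{2^d+C_d(e^\epsilon-1)}{\binom{d-1}{(d-1)/2}(e^\epsilon+2^d\delta-1)}$ if $d$ is odd, $B_{\epsilon,\delta}=\frac{2^d+C_d(e^\epsilon-1)}{\binom{d-1}{d/2}(e^\epsilon+2^d\delta-1)}$ if $d$ is even. *)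

theory Defs
  imports "HOL-Probability.Probability"
begin

(* Vectors in R^d are functions nat => real; coordinates j < d are meaningful,
   coordinates >= d are fixed to 0. *)

definition C_const :: "nat \<Rightarrow> real" where
  "C_const d = (if odd d then 2 ^ (d - 1)
                else 2 ^ (d - 1) - (1/2) * real (d choose (d div 2)))"

definition alpha_param :: "nat \<Rightarrow> real \<Rightarrow> real \<Rightarrow> real" where
  "alpha_param d \<epsilon> \<delta> = (if odd d
      then (exp \<epsilon> + C_const d * \<delta>) / (exp \<epsilon> + 1)
      else (exp \<epsilon> * C_const d + \<delta> * C_const d * (2 ^ d - C_const d))
           / ((exp \<epsilon> - 1) * C_const d + 2 ^ d))"

definition B_param :: "nat \<Rightarrow> real \<Rightarrow> real \<Rightarrow> real" where
  "B_param d \<epsilon> \<delta> = (if odd d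
      then (2 ^ d + C_const d * (exp \<epsilon> - 1))
           / (real ((d - 1) choose ((d - 1) div 2)) * (exp \<epsilon> + 2 ^ d * \<delta> - 1))
      else (2 ^ d + C_const d * (exp \<epsilon> - 1))
           / (real ((d - 1) choose (d div 2)) * (exp \<epsilon> + 2 ^ d * \<delta> - 1)))"

definition cube :: "nat \<Rightarrow> real \<Rightarrow> (nat \<Rightarrow> real) set" where
  "cube d B = PiE {0..<d} (\<lambda>_. {-B, B})"

definition T_plus :: "nat \<Rightarrow> real \<Rightarrow> (nat \<Rightarrow> real) \<Rightarrow> (nat \<Rightarrow> real) set" where
  "T_plus d B v = {y \<in> cube d B. (\<Sum>j<d. y j * v j) > 0}"

definition T_minus :: "nat \<Rightarrow> real \<Rightarrow> (nat \<Rightarrow> real) \<Rightarrow> (nat \<Rightarrow> real) set" where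
  "T_minus d B v = {y \<in> cube d B. (\<Sum>j<d. y j * v j) \<le> 0}"

definition sign_vec :: "nat \<Rightarrow> (nat \<Rightarrow> real) \<Rightarrow> (nat \<Rightarrow> real) pmf" where
  "sign_vec d x = Pi_pmf {0..<d} 0
     (\<lambda>j. map_pmf (\<lambda>b. if b then 1 else -1) (bernoulli_pmf (1/2 + x j / 2)))"

definition mech :: "nat \<Rightarrow> real \<Rightarrow> real \<Rightarrow> (nat \<Rightarrow> real) \<Rightarrow> (nat \<Rightarrow> real) pmf" where
  "mech d \<alpha> B x =
     do { V \<leftarrow> sign_vec d x;
          u \<leftarrow> bernoulli_pmf \<alpha>;
          pmf_of_set (if u then T_plus d B V else T_minus d B V) }"

definition mechanism1 :: "nat \<Rightarrow> real \<Rightarrow> real \<Rightarrow> (nat \<Rightarrow> real) \<Rightarrow> (nat \<Rightarrow> real) pmf" where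
  "mechanism1 d \<epsilon> \<delta> = mech d (alpha_param d \<epsilon> \<delta>) (B_param d \<epsilon> \<delta>)"

definition mechanism1_all ::
  "nat \<Rightarrow> nat \<Rightarrow> real \<Rightarrow> real \<Rightarrow> (nat \<Rightarrow> nat \<Rightarrow> real) \<Rightarrow> (nat \<Rightarrow> nat \<Rightarrow> real) pmf" where
  "mechanism1_all d N \<epsilon> \<delta> x = Pi_pmf {0..<N} (\<lambda>_. 0) (\<lambda>i. mechanism1 d \<epsilon> \<delta> (x i))"

definition coord_mean :: "nat \<Rightarrow> (nat \<Rightarrow> nat \<Rightarrow> real) \<Rightarrow> nat \<Rightarrow> real" where
  "coord_mean N x j = (\<Sum>i<N. x i j) / real N"

end

theory Submission
  imports Defs
begin

text \<open>
  Conditioned on the sign vector \<open>V\<close>, the set \<open>T\<^sup>+(V)\<close> consists of the cube points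
  agreeing with \<open>B V\<close> on a strict majority of coordinates, so its \<open>j\<close>-th coordinates sum to
  \<open>B V\<^sub>j\<close> times the number of such majorities containing \<open>j\<close> minus those avoiding it, which is
  \<open>binom (d - 1) (d div 2)\<close>; \<open>T\<^sup>-(V)\<close> gives the negative of this. The parameters \<open>\<alpha>\<close> and \<open>B\<close>
  are chosen so that the mechanism is unbiased, and since its outputs lie in \<open>[-B, B]\<^sup>d\<close>,
  Hoeffding's inequality and a union bound over the \<open>d\<close> coordinates give deviation
  \<open>O(B \<surd>(log (d/\<beta>) / N))\<close>. Finally \<open>B (\<epsilon> + 2\<^sup>d \<delta>) = O(2\<^sup>d / binom (d - 1) (d div 2)) = O(\<surd>d)\<close>
  by the lower bound \<open>binom (2k) k\<^sup>2 (4k + 1) \<ge> 16\<^sup>k\<close> on central binomial coefficients.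
\<close>

section \<open>Majority subsets\<close>

definition majority_sets :: "nat \<Rightarrow> nat set set" where
  "majority_sets d = {P. P \<subseteq> {..<d} \<and> d < 2 * card P}"

definition set_sign :: "nat set \<Rightarrow> nat \<Rightarrow> real" where
  "set_sign P k = (if k \<in> P then 1 else -1)"

lemma majority_sets_subset_Pow: "majority_sets d \<subseteq> Pow {..<d}"
  by (auto simp: majority_sets_def)

lemma finite_majority_sets: "finite (majority_sets d)"
  using majority_sets_subset_Pow by (rule finite_subset) simp

lemma lessThan_in_majority_sets: "d \<ge> 1 \<Longrightarrow> {..<d} \<in> majority_sets d"
  by (auto simp: majority_sets_def)

lemma empty_notin_majority_sets: "{} \<notin> majority_sets d"
  by (simp add: majority_sets_def)

lemma sum_Pow_insert_split:
  fixes h :: "'a set \<Rightarrow> 'b::comm_monoid_add"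
  assumes "finite A" "j \<in> A"
  shows "(\<Sum>P\<in>Pow A. h P) = (\<Sum>Q\<in>Pow (A - {j}). h Q + h (insert j Q))"
proof -
  define D where "D = A - {j}"
  have A: "A = insert j D" and jD: "j \<notin> D" and fin: "finite D"
    using assms by (auto simp: D_def)
  have inj: "inj_on (insert j) (Pow D)"
    using jD by (auto simp: inj_on_def)
  have "(\<Sum>P\<in>Pow A. h P) = (\<Sum>P\<in>Pow D \<union> insert j ` Pow D. h P)"
    by (simp add: A Pow_insert)
  also have "\<dots> = (\<Sum>P\<in>Pow D. h P) + (\<Sum>Q\<in>Pow D. h (insert j Q))"
    using fin jD by (subst sum.union_disjoint) (auto simp: sum.reindex[OF inj])
  finally show ?thesis
    by (simp add: D_def sum.distrib)
qed

lemma sum_set_sign_Pow: "j < d \<Longrightarrow> (\<Sum>P\<in>Pow {..<d}. set_sign P j) = 0"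
  by (subst sum_Pow_insert_split[of _ j]) (auto simp: set_sign_def intro!: sum.neutral)

text \<open>Pairing \<open>Q\<close> with \<open>insert j Q\<close>, the two signs cancel unless exactly \<open>insert j Q\<close> is a majority.\<close>

lemma sum_set_sign_majority_sets:
  assumes j: "j < d"
  shows "(\<Sum>P\<in>majority_sets d. set_sign P j) = real ((d - 1) choose (d div 2))"
proof -
  define D where "D = {..<d} - {j}"
  have finD: "finite D" and cardD: "card D = d - 1"
    using j by (simp_all add: D_def)
  have "(\<Sum>P\<in>majority_sets d. set_sign P j)
      = (\<Sum>P\<in>Pow {..<d}. if d < 2 * card P then set_sign P j else 0)"
    unfolding majority_sets_def by (subst sum.inter_filter[symmetric]) (auto intro!: sum.cong)
  also have "\<dots> = (\<Sum>Q\<in>Pow D. (if d < 2 * card Q then set_sign Q j else 0)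
                  + (if d < 2 * card (insert j Q) then set_sign (insert j Q) j else 0))"
    unfolding D_def using j by (intro sum_Pow_insert_split) auto
  also have "\<dots> = (\<Sum>Q\<in>Pow D. if card Q = d div 2 then 1 else 0)"
  proof (intro sum.cong refl)
    fix Q assume "Q \<in> Pow D"
    then have "j \<notin> Q" "finite Q"
      using finD by (auto simp: D_def intro: finite_subset)
    then show "(if d < 2 * card Q then set_sign Q j else 0)
          + (if d < 2 * card (insert j Q) then set_sign (insert j Q) j else 0)
          = (if card Q = d div 2 then 1 else 0)"
      by (auto simp: set_sign_def)
  qed
  also have "\<dots> = real (card {Q. Q \<subseteq> D \<and> card Q = d div 2})"
    by (subst sum.If_cases) (auto simp: finD intro!: arg_cong[where f=card])
  also have "\<dots> = real ((d - 1) choose (d div 2))"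
    by (simp add: n_subsets[OF finD] cardD)
  finally show ?thesis .
qed

text \<open>Complementation in \<open>{..<d}\<close> exchanges majorities and minorities; for even \<open>d\<close> the
  halves remain.\<close>

lemma card_majority_sets:
  "2 * card (majority_sets d) + (if even d then d choose (d div 2) else 0) = 2 ^ d"
proof -
  define M where "M = {P. P \<subseteq> {..<d} \<and> 2 * card P < d}"
  define H where "H = {P. P \<subseteq> {..<d} \<and> 2 * card P = d}"
  have card_compl: "card ({..<d} - P) = d - card P" "card P \<le> d" if "P \<subseteq> {..<d}" for P
    using that card_mono[of "{..<d}" P] card_Diff_subset[of P "{..<d}"]
    by (auto intro: finite_subset)
  have finM: "finite M" and finH: "finite H"
    by (auto simp: M_def H_def intro: finite_subset[of _ "Pow {..<d}"])
  have partition: "Pow {..<d} = majority_sets d \<union> (M \<union> H)"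
    and disjoint: "majority_sets d \<inter> (M \<union> H) = {}" "M \<inter> H = {}"
    by (auto simp: majority_sets_def M_def H_def)
  have "2 ^ d = card (majority_sets d) + (card M + card H)"
  proof -
    have "(2::nat) ^ d = card (majority_sets d \<union> (M \<union> H))"
      by (simp add: partition[symmetric] card_Pow)
    also have "\<dots> = card (majority_sets d) + (card M + card H)"
      using finite_majority_sets finM finH disjoint by (simp add: card_Un_disjoint)
    finally show ?thesis .
  qed
  moreover have "card M = card (majority_sets d)"
  proof -
    have "bij_betw (\<lambda>P. {..<d} - P) (majority_sets d) M"
    proof (rule bij_betw_byWitness[where f' = "\<lambda>P. {..<d} - P"])
      show "(\<lambda>P. {..<d} - P) ` majority_sets d \<subseteq> M" "(\<lambda>P. {..<d} - P) ` M \<subseteq> majority_sets d"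
      proof safe
        fix P assume "P \<in> majority_sets d"
        then show "{..<d} - P \<in> M"
          using card_compl[of P] unfolding majority_sets_def M_def by auto
      next
        fix P assume "P \<in> M"
        then show "{..<d} - P \<in> majority_sets d"
          using card_compl[of P] unfolding majority_sets_def M_def by auto
      qed
    qed (auto simp: majority_sets_def M_def)
    then show ?thesis
      by (simp add: bij_betw_same_card)
  qed
  moreover have "card H = (if even d then d choose (d div 2) else 0)"
  proof (cases "even d")
    case True
    then have "H = {P. P \<subseteq> {..<d} \<and> card P = d div 2}"
      by (auto simp: H_def)
    then show ?thesis
      using True by (simp add: n_subsets)
  qed (auto simp: H_def)
  ultimately show ?thesis
    by simp
qed

section \<open>The cube seen from a sign vector\<close>

text \<open>Relative to a sign vector \<open>v\<close>, a point of \<open>{-B, B}\<^sup>d\<close> is coded by the set of coordinates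
  on which it agrees with \<open>B v\<close>.\<close>

definition cube_point :: "nat \<Rightarrow> real \<Rightarrow> (nat \<Rightarrow> real) \<Rightarrow> nat set \<Rightarrow> nat \<Rightarrow> real" where
  "cube_point d B v P = (\<lambda>k\<in>{0..<d}. B * v k * set_sign P k)"

locale sign_cube =
  fixes d :: nat and B :: real and v :: "nat \<Rightarrow> real"
  assumes B_pos: "B > 0" and sign: "k < d \<Longrightarrow> v k = 1 \<or> v k = -1"
begin

lemma inj_on_cube_point: "inj_on (cube_point d B v) (Pow {..<d})"
proof (rule inj_onI)
  fix P Q assume "P \<in> Pow {..<d}" "Q \<in> Pow {..<d}" and eq: "cube_point d B v P = cube_point d B v Q"
  have sign_eq: "set_sign P k = set_sign Q k" if "k < d" for k
    using fun_cong[OF eq, of k] that B_pos sign[OF that] by (auto simp: cube_point_def)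
  have "k \<in> P \<longleftrightarrow> k \<in> Q" if "k < d" for k
    using sign_eq[OF that] by (auto simp: set_sign_def split: if_splits)
  then show "P = Q"
    using \<open>P \<in> Pow {..<d}\<close> \<open>Q \<in> Pow {..<d}\<close> by blast
qed

lemma cube_eq_image: "cube d B = cube_point d B v ` Pow {..<d}"
proof
  have "B * v k * set_sign P k \<in> {-B, B}" if "k \<in> {0..<d}" for k P
    using sign[of k] that by (auto simp: set_sign_def)
  then have "cube_point d B v P \<in> cube d B" for P
    unfolding cube_def cube_point_def restrict_PiE Pi_iff by blast
  then show "cube_point d B v ` Pow {..<d} \<subseteq> cube d B"
    by blast
next
  show "cube d B \<subseteq> cube_point d B v ` Pow {..<d}"
  proof
    fix y assume y: "y \<in> cube d B"
    have "y = cube_point d B v {k. k < d \<and> y k = B * v k}"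
    proof
      fix k
      show "y k = cube_point d B v {k. k < d \<and> y k = B * v k} k"
        using y sign[of k] B_pos
        by (cases "k < d") (auto simp: cube_def cube_point_def set_sign_def PiE_iff extensional_def)
    qed
    then show "y \<in> cube_point d B v ` Pow {..<d}"
      by blast
  qed
qed

lemma inner_cube_point:
  assumes "P \<subseteq> {..<d}"
  shows "(\<Sum>k<d. cube_point d B v P k * v k) = B * (2 * real (card P) - real d)"
proof -
  have "(\<Sum>k<d. cube_point d B v P k * v k) = (\<Sum>k<d. if k \<in> P then B else - B)"
  proof (intro sum.cong refl)
    fix k assume "k \<in> {..<d}"
    then show "cube_point d B v P k * v k = (if k \<in> P then B else - B)"
      using sign[of k] by (auto simp: cube_point_def set_sign_def)
  qed
  also have "\<dots> = B * real (card P) - B * real (card ({..<d} - P))"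
    using assms by (subst sum.If_cases) (auto simp: Int_absorb1 Diff_eq)
  also have "real (card ({..<d} - P)) = real d - real (card P)"
    using assms card_mono[OF _ assms] by (simp add: card_Diff_subset finite_subset of_nat_diff)
  finally show ?thesis
    by (simp add: algebra_simps)
qed

lemma T_plus_eq_image: "T_plus d B v = cube_point d B v ` majority_sets d"
proof -
  have "T_plus d B v = cube_point d B v ` {P \<in> Pow {..<d}. (\<Sum>j<d. cube_point d B v P j * v j) > 0}"
    unfolding T_plus_def cube_eq_image by auto
  also have "{P \<in> Pow {..<d}. (\<Sum>j<d. cube_point d B v P j * v j) > 0} = majority_sets d"
    using B_pos by (auto simp: inner_cube_point majority_sets_def zero_less_mult_iff)
  finally show ?thesis .
qed

lemma T_minus_eq_image: "T_minus d B v = cube_point d B v ` (Pow {..<d} - majority_sets d)"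
proof -
  have "T_minus d B v = cube_point d B v ` {P \<in> Pow {..<d}. (\<Sum>j<d. cube_point d B v P j * v j) \<le> 0}"
    unfolding T_minus_def cube_eq_image by auto
  also have "{P \<in> Pow {..<d}. (\<Sum>j<d. cube_point d B v P j * v j) \<le> 0} = Pow {..<d} - majority_sets d"
    using B_pos by (auto simp: inner_cube_point majority_sets_def mult_le_0_iff)
  finally show ?thesis .
qed

lemma finite_T_plus: "finite (T_plus d B v)"
  and finite_T_minus: "finite (T_minus d B v)"
  by (simp_all add: T_plus_eq_image T_minus_eq_image finite_majority_sets)

lemma T_plus_nonempty: "d \<ge> 1 \<Longrightarrow> T_plus d B v \<noteq> {}"
  using lessThan_in_majority_sets by (auto simp: T_plus_eq_image)

lemma T_minus_nonempty: "T_minus d B v \<noteq> {}"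
  using empty_notin_majority_sets by (auto simp: T_minus_eq_image)

lemma card_T_plus: "card (T_plus d B v) = card (majority_sets d)"
  unfolding T_plus_eq_image
  by (rule card_image) (rule inj_on_subset[OF inj_on_cube_point majority_sets_subset_Pow])

lemma card_T_minus: "card (T_minus d B v) + card (majority_sets d) = 2 ^ d"
proof -
  have "card (T_minus d B v) = card (Pow {..<d} - majority_sets d)"
    unfolding T_minus_eq_image by (rule card_image) (auto intro: inj_on_subset[OF inj_on_cube_point])
  then show ?thesis
    using majority_sets_subset_Pow card_mono[OF _ majority_sets_subset_Pow]
    by (simp add: card_Diff_subset finite_majority_sets card_Pow)
qed

lemma sum_T_plus:
  assumes "j < d"
  shows "(\<Sum>y\<in>T_plus d B v. y j) = B * v j * real ((d - 1) choose (d div 2))"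
proof -
  have "(\<Sum>y\<in>T_plus d B v. y j) = (\<Sum>P\<in>majority_sets d. B * v j * set_sign P j)"
    unfolding T_plus_eq_image using assms
    by (subst sum.reindex[OF inj_on_subset[OF inj_on_cube_point majority_sets_subset_Pow]])
      (simp add: cube_point_def)
  then show ?thesis
    by (simp add: sum_distrib_left[symmetric] sum_set_sign_majority_sets[OF assms])
qed

lemma sum_T_minus:
  assumes "j < d"
  shows "(\<Sum>y\<in>T_minus d B v. y j) = - B * v j * real ((d - 1) choose (d div 2))"
proof -
  have "(\<Sum>y\<in>T_minus d B v. y j) = (\<Sum>P\<in>Pow {..<d} - majority_sets d. B * v j * set_sign P j)"
    unfolding T_minus_eq_image using assms
    by (subst sum.reindex[OF inj_on_subset[OF inj_on_cube_point]]) (auto simp: cube_point_def)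
  also have "\<dots> = B * v j * ((\<Sum>P\<in>Pow {..<d}. set_sign P j) - (\<Sum>P\<in>majority_sets d. set_sign P j))"
    using majority_sets_subset_Pow by (simp add: sum_distrib_left[symmetric] sum_diff)
  finally show ?thesis
    by (simp add: sum_set_sign_Pow[OF assms] sum_set_sign_majority_sets[OF assms])
qed

end

section \<open>Expectation of the mechanism\<close>

lemma expectation_bind_pmf_finite:
  fixes h :: "'b \<Rightarrow> real"
  assumes "finite (set_pmf p)" "\<And>a. a \<in> set_pmf p \<Longrightarrow> finite (set_pmf (f a))"
    and "\<And>a. a \<in> set_pmf p \<Longrightarrow> measure_pmf.expectation (f a) h = g a"
  shows "measure_pmf.expectation (bind_pmf p f) h = measure_pmf.expectation p g"
proof -
  have "measure_pmf.expectation (bind_pmf p f) h =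
        (\<Sum>a\<in>set_pmf p. pmf p a *\<^sub>R measure_pmf.expectation (f a) h)"
    using assms by (intro pmf_expectation_bind) auto
  also have "\<dots> = (\<Sum>a\<in>set_pmf p. g a * pmf p a)"
    using assms by (intro sum.cong) auto
  also have "\<dots> = measure_pmf.expectation p g"
    using assms by (intro integral_measure_pmf_real[symmetric]) auto
  finally show ?thesis .
qed

lemma set_pmf_sign_vec: "set_pmf (sign_vec d x) \<subseteq> PiE_dflt {0..<d} 0 (\<lambda>_. {1, -1})"
  unfolding sign_vec_def by (subst set_Pi_pmf) (auto simp: PiE_dflt_def)

lemma finite_set_pmf_sign_vec: "finite (set_pmf (sign_vec d x))"
  by (rule finite_subset[OF set_pmf_sign_vec]) auto

lemma sign_cube_sign_vec: "B > 0 \<Longrightarrow> V \<in> set_pmf (sign_vec d x) \<Longrightarrow> sign_cube d B V"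
  using set_pmf_sign_vec[of d x] by unfold_locales (auto simp: PiE_dflt_def)

lemma expectation_sign_vec:
  assumes "j < d" "-1 \<le> x j" "x j \<le> 1"
  shows "measure_pmf.expectation (sign_vec d x) (\<lambda>V. V j) = x j"
proof -
  have "measure_pmf.expectation (sign_vec d x) (\<lambda>V. V j)
      = measure_pmf.expectation (map_pmf (\<lambda>V. V j) (sign_vec d x)) (\<lambda>r. r)"
    by simp
  also have "map_pmf (\<lambda>V. V j) (sign_vec d x)
      = map_pmf (\<lambda>b. if b then 1 else -1) (bernoulli_pmf (1/2 + x j / 2))"
    unfolding sign_vec_def using assms by (subst Pi_pmf_component) auto
  also have "measure_pmf.expectation \<dots> (\<lambda>r. r) = x j"
    using assms by simp
  finally show ?thesis .
qed

text \<open>Conditioned on \<open>V\<close>, the \<open>j\<close>-th output coordinate has mean \<open>mech_gain d \<alpha> B * V j\<close>.\<close>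

definition mech_gain :: "nat \<Rightarrow> real \<Rightarrow> real \<Rightarrow> real" where
  "mech_gain d \<alpha> B = B * real ((d - 1) choose (d div 2)) *
     (\<alpha> / real (card (majority_sets d)) - (1 - \<alpha>) / (2 ^ d - real (card (majority_sets d))))"

lemma set_pmf_mech:
  assumes "d \<ge> 1" "B > 0"
  shows "set_pmf (mech d \<alpha> B x) \<subseteq> cube d B"
proof
  fix y assume "y \<in> set_pmf (mech d \<alpha> B x)"
  then obtain V u where V: "V \<in> set_pmf (sign_vec d x)"
    and y: "y \<in> set_pmf (pmf_of_set (if u then T_plus d B V else T_minus d B V))"
    unfolding mech_def by auto
  interpret sign_cube d B V
    using sign_cube_sign_vec[OF assms(2) V] .
  have "y \<in> T_plus d B V \<union> T_minus d B V"
    using y T_plus_nonempty[OF assms(1)] T_minus_nonempty finite_T_plus finite_T_minus by (cases u) auto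
  then show "y \<in> cube d B"
    by (auto simp: T_plus_def T_minus_def)
qed

lemma expectation_mech:
  assumes "d \<ge> 1" "j < d" "B > 0" "0 \<le> \<alpha>" "\<alpha> \<le> 1" "-1 \<le> x j" "x j \<le> 1"
  shows "measure_pmf.expectation (mech d \<alpha> B x) (\<lambda>y. y j) = mech_gain d \<alpha> B * x j"
proof -
  define c where "c = real (card (majority_sets d))"
  define m where "m = real ((d - 1) choose (d div 2))"
  have conditional: "measure_pmf.expectation (bind_pmf (bernoulli_pmf \<alpha>)
      (\<lambda>u. pmf_of_set (if u then T_plus d B V else T_minus d B V))) (\<lambda>y. y j) = mech_gain d \<alpha> B * V j"
    if V: "V \<in> set_pmf (sign_vec d x)" for V
  proof -
    interpret sign_cube d B V
      using sign_cube_sign_vec[OF assms(3) V] .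
    have card_minus: "real (card (T_minus d B V)) = 2 ^ d - c"
      using arg_cong[OF card_T_minus, of real] by (simp add: c_def)
    have plus: "measure_pmf.expectation (pmf_of_set (T_plus d B V)) (\<lambda>y. y j) = B * V j * m / c"
      using assms T_plus_nonempty finite_T_plus
      by (simp add: integral_pmf_of_set sum_T_plus card_T_plus c_def m_def)
    have minus: "measure_pmf.expectation (pmf_of_set (T_minus d B V)) (\<lambda>y. y j) = - B * V j * m / (2 ^ d - c)"
      using assms T_minus_nonempty finite_T_minus
      by (simp add: integral_pmf_of_set sum_T_minus card_minus m_def)
    have "measure_pmf.expectation (bind_pmf (bernoulli_pmf \<alpha>)
        (\<lambda>u. pmf_of_set (if u then T_plus d B V else T_minus d B V))) (\<lambda>y. y j)
      = measure_pmf.expectation (bernoulli_pmf \<alpha>)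
          (\<lambda>u. if u then B * V j * m / c else - B * V j * m / (2 ^ d - c))"
      using assms(1) T_plus_nonempty T_minus_nonempty finite_T_plus finite_T_minus plus minus
      by (intro expectation_bind_pmf_finite) auto
    also have "\<dots> = mech_gain d \<alpha> B * V j"
      using assms by (simp add: mech_gain_def c_def m_def algebra_simps)
    finally show ?thesis .
  qed
  have "measure_pmf.expectation (mech d \<alpha> B x) (\<lambda>y. y j)
      = measure_pmf.expectation (sign_vec d x) (\<lambda>V. mech_gain d \<alpha> B * V j)"
    unfolding mech_def
  proof (rule expectation_bind_pmf_finite[OF finite_set_pmf_sign_vec _ conditional])
    fix V assume V: "V \<in> set_pmf (sign_vec d x)"
    interpret sign_cube d B V
      using sign_cube_sign_vec[OF assms(3) V] .
    have "set_pmf (bernoulli_pmf \<alpha> \<bind> (\<lambda>u. pmf_of_set (if u then T_plus d B V else T_minus d B V)))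
        \<subseteq> T_plus d B V \<union> T_minus d B V"
      using assms(1) T_plus_nonempty T_minus_nonempty finite_T_plus finite_T_minus
      by (auto split: if_splits)
    then show "finite (set_pmf (bernoulli_pmf \<alpha> \<bind> (\<lambda>u. pmf_of_set (if u then T_plus d B V else T_minus d B V))))"
      by (rule finite_subset) (simp add: finite_T_plus finite_T_minus)
  qed
  also have "\<dots> = mech_gain d \<alpha> B * x j"
    using expectation_sign_vec[of j d x] assms by simp
  finally show ?thesis .
qed

section \<open>Central binomial coefficients\<close>

lemma central_binomial_Suc: "(2 * k + 2 choose (k + 1)) * (k + 1) = 2 * (2 * k + 1) * (2 * k choose k)"
proof -
  have step1: "Suc k * (Suc (2 * k + 1) choose Suc k) = Suc (2 * k + 1) * ((2 * k + 1) choose k)"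
    by (rule Suc_times_binomial)
  have sym: "(2 * k + 1) choose k = (2 * k + 1) choose (k + 1)"
    using binomial_symmetric[of k "2 * k + 1"] by (simp add: numeral_2_eq_2)
  have step2: "Suc k * (Suc (2 * k) choose Suc k) = Suc (2 * k) * (2 * k choose k)"
    by (rule Suc_times_binomial)
  have "(k + 1) * ((2 * k + 2 choose (k + 1)) * (k + 1)) = (2 * k + 2) * ((k + 1) * ((2 * k + 1) choose (k + 1)))"
    using step1 sym by (simp add: algebra_simps)
  also have "(k + 1) * ((2 * k + 1) choose (k + 1)) = (2 * k + 1) * (2 * k choose k)"
    using step2 by simp
  finally have "(k + 1) * ((2 * k + 2 choose (k + 1)) * (k + 1)) = (k + 1) * (2 * (2 * k + 1) * (2 * k choose k))"
    by (simp add: algebra_simps)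
  then show ?thesis
    using mult_left_cancel[of "k + 1 :: nat"] by (simp del: binomial_Suc_Suc)
qed

lemma central_binomial_sq_lower_bound: "(16::real) ^ k \<le> real (2 * k choose k) ^ 2 * (4 * real k + 1)"
proof (induction k)
  case 0
  then show ?case by simp
next
  case (Suc k)
  define b where "b = real (2 * k choose k)"
  define b' where "b' = real (2 * Suc k choose Suc k)"
  have rec: "b' * (real k + 1) = 2 * (2 * real k + 1) * b"
    using arg_cong[OF central_binomial_Suc[of k], of real] by (simp add: b_def b'_def algebra_simps)
  have "(real k + 1)^2 * 16 ^ Suc k = 16 * (real k + 1)^2 * 16 ^ k"
    by simp
  also have "\<dots> \<le> 16 * (real k + 1)^2 * (b^2 * (4 * real k + 1))"
    using Suc.IH by (intro mult_left_mono) (simp_all add: b_def)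
  also have "\<dots> = (16 * (real k + 1)^2 * (4 * real k + 1)) * b^2"
    by (simp add: ac_simps)
  also have "\<dots> \<le> (4 * (2 * real k + 1)^2 * (4 * real k + 5)) * b^2"
    by (intro mult_right_mono) (simp_all add: power2_eq_square algebra_simps)
  also have "\<dots> = (2 * (2 * real k + 1) * b)^2 * (4 * real k + 5)"
    by (simp add: power2_eq_square algebra_simps)
  also have "\<dots> = (real k + 1)^2 * (b'^2 * (4 * real (Suc k) + 1))"
    unfolding rec[symmetric] by (simp add: power_mult_distrib)
  finally show ?case
    by (simp add: b'_def mult_le_cancel_left_pos)
qed

lemma two_power_sq_le_middle_binomial:
  assumes "d \<ge> 1"
  shows "(2 ^ d :: real) ^ 2 \<le> 32 * real d * real ((d - 1) choose (d div 2)) ^ 2"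
proof (cases "odd d")
  case True
  then obtain k where d: "d = 2 * k + 1"
    by (metis oddE)
  define b where "b = real (2 * k choose k)"
  have "(2 ^ d :: real) ^ 2 = 4 * 16 ^ k"
    by (simp add: d power_mult power_add power2_eq_square power_mult_distrib[symmetric])
  also have "\<dots> \<le> 4 * (b^2 * (4 * real k + 1))"
    using central_binomial_sq_lower_bound[of k] by (simp add: b_def)
  also have "\<dots> = (4 * (4 * real k + 1)) * b^2"
    by simp
  also have "\<dots> \<le> (32 * real d) * b^2"
    by (intro mult_right_mono) (simp_all add: d)
  finally show ?thesis
    by (simp add: d b_def)
next
  case False
  then obtain k' where "d = 2 * k'"
    by (auto elim: evenE)
  with assms obtain k where d: "d = 2 * k + 2"
    by (intro that[of "k' - 1"]) simp
  define b where "b = real (2 * k choose k)"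
  define b' where "b' = real (Suc (2 * k) choose Suc k)"
  have "(2 ^ d :: real) ^ 2 = 16 * 16 ^ k"
    by (simp add: d power_add power_mult power_add power2_eq_square power_mult_distrib[symmetric])
  also have "\<dots> \<le> 16 * (b^2 * (4 * real k + 1))"
    using central_binomial_sq_lower_bound[of k] by (simp add: b_def)
  also have "\<dots> = (16 * (4 * real k + 1)) * b^2"
    by simp
  also have "\<dots> \<le> (16 * (4 * real k + 1)) * b'^2"
    by (intro mult_left_mono power_mono) (simp_all add: b_def b'_def)
  also have "\<dots> \<le> (32 * real d) * b'^2"
    by (intro mult_right_mono) (simp_all add: d)
  also have "b' = real ((d - 1) choose (d div 2))"
    by (simp add: b'_def d)
  finally show ?thesis .
qed

section \<open>The parameters of Mechanism-1\<close>

lemma card_majority_sets_pos: "d \<ge> 1 \<Longrightarrow> 0 < card (majority_sets d)"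
  using lessThan_in_majority_sets finite_majority_sets by (auto simp: card_gt_0_iff)

lemma card_majority_sets_le: "2 * real (card (majority_sets d)) \<le> 2 ^ d"
  using arg_cong[OF card_majority_sets[of d], of real] by (auto split: if_splits)

lemma C_const_eq_card_majority_sets:
  assumes "d \<ge> 1"
  shows "C_const d = real (card (majority_sets d))"
proof -
  have "(2::real) ^ d = 2 * 2 ^ (d - 1)"
    using assms by (simp add: power_eq_if)
  then show ?thesis
    using arg_cong[OF card_majority_sets[of d], of real] by (auto simp: C_const_def)
qed

text \<open>The algebra behind the unbiasedness of Mechanism-1: \<open>c\<close> counts the majorities among the
  \<open>T = 2\<^sup>d\<close> cube points, \<open>e = exp \<epsilon>\<close> and \<open>m = binom (d - 1) (d div 2)\<close>.\<close>

lemma unbiasing_identity: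
  fixes c T e \<delta> m :: real
  defines "\<alpha> \<equiv> (e * c + \<delta> * c * (T - c)) / (T + c * (e - 1))"
    and "B \<equiv> (T + c * (e - 1)) / (m * (e + T * \<delta> - 1))"
  assumes "0 < c" "c < T" "0 < T + c * (e - 1)" "0 < e + T * \<delta> - 1" "0 < m"
  shows "B * m * (\<alpha> / c - (1 - \<alpha>) / (T - c)) = 1"
proof -
  define D where "D = T + c * (e - 1)"
  have "D \<noteq> 0" "T - c \<noteq> 0" "e + T * \<delta> - 1 \<noteq> 0"
    using assms by (simp_all add: D_def)
  have \<alpha>: "\<alpha> = (e * c + \<delta> * c * (T - c)) / D"
    by (simp add: \<alpha>_def D_def)
  have "\<alpha> / c = (e + \<delta> * (T - c)) / D"
    using \<open>0 < c\<close> \<open>D \<noteq> 0\<close> by (simp add: \<alpha> field_simps)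
  moreover have "(1 - \<alpha>) / (T - c) = (1 - \<delta> * c) / D"
    using \<open>D \<noteq> 0\<close> \<open>T - c \<noteq> 0\<close> by (simp add: \<alpha> field_simps) (simp add: D_def algebra_simps)
  moreover have "(e + \<delta> * (T - c)) / D - (1 - \<delta> * c) / D = (e + T * \<delta> - 1) / D"
    by (simp add: diff_divide_distrib[symmetric] algebra_simps)
  ultimately show ?thesis
    using \<open>D \<noteq> 0\<close> \<open>e + T * \<delta> - 1 \<noteq> 0\<close> \<open>0 < m\<close> by (simp add: B_def D_def[symmetric])
qed

context
  fixes d :: nat and \<epsilon> \<delta> :: real
  assumes d: "d \<ge> 1" and \<epsilon>: "0 < \<epsilon>" and \<delta>: "0 \<le> \<delta>" and C_\<delta>: "C_const d * \<delta> < 1"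
begin

abbreviation (input) majorities :: real where
  "majorities \<equiv> real (card (majority_sets d))"

abbreviation (input) middle_binomial :: real where
  "middle_binomial \<equiv> real ((d - 1) choose (d div 2))"

lemma majorities_bounds: "0 < majorities" "majorities < 2 ^ d"
proof -
  show "0 < majorities"
    using card_majority_sets_pos[OF d] by simp
  then show "majorities < 2 ^ d"
    using card_majority_sets_le[of d] by linarith
qed

text \<open>For odd \<open>d\<close> the paper's formula for \<open>\<alpha>\<close> is the even-case formula with \<open>2 C\<^sub>d = 2\<^sup>d\<close>.\<close>

lemma alpha_param_eq:
  "alpha_param d \<epsilon> \<delta> =
     (exp \<epsilon> * majorities + \<delta> * majorities * (2 ^ d - majorities)) / (2 ^ d + majorities * (exp \<epsilon> - 1))"
proof (cases "odd d")
  case True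
  then have two_maj: "2 * majorities = 2 ^ d"
    using arg_cong[OF card_majority_sets[of d], of real] by simp
  have "(exp \<epsilon> * majorities + \<delta> * majorities * (2 ^ d - majorities)) / (2 ^ d + majorities * (exp \<epsilon> - 1))
      = (majorities * (exp \<epsilon> + \<delta> * majorities)) / (majorities * (exp \<epsilon> + 1))"
    by (simp add: two_maj[symmetric] algebra_simps)
  also have "\<dots> = (exp \<epsilon> + \<delta> * majorities) / (exp \<epsilon> + 1)"
    using majorities_bounds by simp
  finally show ?thesis
    using True by (simp add: alpha_param_def C_const_eq_card_majority_sets[OF d] mult.commute)
qed (simp add: alpha_param_def C_const_eq_card_majority_sets[OF d] algebra_simps)

lemma B_param_eq:
  "B_param d \<epsilon> \<delta> = (2 ^ d + majorities * (exp \<epsilon> - 1)) / (middle_binomial * (exp \<epsilon> + 2 ^ d * \<delta> - 1))"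
proof (cases "odd d")
  case True
  then have "(d - 1) div 2 = d div 2"
    by (auto elim: oddE)
  then show ?thesis
    using True by (simp add: B_param_def C_const_eq_card_majority_sets[OF d])
qed (simp add: B_param_def C_const_eq_card_majority_sets[OF d])

lemma middle_binomial_pos: "0 < middle_binomial"
  using d by (simp add: zero_less_binomial_iff)

lemma privacy_denominator_pos: "0 < exp \<epsilon> + 2 ^ d * \<delta> - 1"
proof -
  have "1 < exp \<epsilon>" "0 \<le> 2 ^ d * \<delta>"
    using \<epsilon> \<delta> by simp_all
  then show ?thesis
    by linarith
qed

lemma alpha_denominator_pos: "0 < 2 ^ d + majorities * (exp \<epsilon> - 1)"
  using \<epsilon> majorities_bounds by (simp add: add_pos_pos)

lemma B_param_pos: "0 < B_param d \<epsilon> \<delta>"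
  unfolding B_param_eq
  using alpha_denominator_pos middle_binomial_pos privacy_denominator_pos by (intro divide_pos_pos mult_pos_pos)

lemma alpha_param_nonneg: "0 \<le> alpha_param d \<epsilon> \<delta>"
  using majorities_bounds alpha_denominator_pos \<delta> by (simp add: alpha_param_eq)

lemma alpha_param_le_one: "alpha_param d \<epsilon> \<delta> \<le> 1"
proof -
  have "\<delta> * majorities \<le> 1"
    using C_\<delta> by (simp add: C_const_eq_card_majority_sets[OF d] mult.commute)
  then have "\<delta> * majorities * (2 ^ d - majorities) \<le> 1 * (2 ^ d - majorities)"
    using majorities_bounds by (intro mult_right_mono) simp_all
  then show ?thesis
    using alpha_denominator_pos by (simp add: alpha_param_eq algebra_simps)
qed

lemma mech_gain_mechanism1: "mech_gain d (alpha_param d \<epsilon> \<delta>) (B_param d \<epsilon> \<delta>) = 1"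
  unfolding mech_gain_def alpha_param_eq B_param_eq
  using majorities_bounds alpha_denominator_pos privacy_denominator_pos middle_binomial_pos
  by (intro unbiasing_identity)

lemma B_param_bound:
  assumes "\<epsilon> \<le> 1"
  shows "B_param d \<epsilon> \<delta> * (\<epsilon> + 2 ^ d * \<delta>) \<le> 12 * sqrt (real d)"
proof -
  define D where "D = 2 ^ d + majorities * (exp \<epsilon> - 1)"
  define E where "E = exp \<epsilon> + 2 ^ d * \<delta> - 1"
  have E: "E > 0" and "D \<ge> 0"
    using privacy_denominator_pos majorities_bounds \<epsilon> by (simp_all add: E_def D_def)
  have "exp \<epsilon> \<le> 3"
    using assms exp_le by (meson exp_le_cancel_iff order_trans)
  then have "majorities * (exp \<epsilon> - 1) \<le> majorities * 2"
    using majorities_bounds by (intro mult_left_mono) simp_all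
  then have "D \<le> 2 * 2 ^ d"
    using card_majority_sets_le[of d] by (simp add: D_def)
  have "1 + \<epsilon> \<le> exp \<epsilon>"
    by (rule exp_ge_add_one_self)
  then have "\<epsilon> + 2 ^ d * \<delta> \<le> E"
    unfolding E_def by linarith
  then have "(\<epsilon> + 2 ^ d * \<delta>) / E \<le> 1"
    using E by simp
  have "B_param d \<epsilon> \<delta> * (\<epsilon> + 2 ^ d * \<delta>) = (D / middle_binomial) * ((\<epsilon> + 2 ^ d * \<delta>) / E)"
    by (simp add: B_param_eq D_def E_def)
  also have "\<dots> \<le> D / middle_binomial"
    using \<open>(\<epsilon> + 2 ^ d * \<delta>) / E \<le> 1\<close> \<open>D \<ge> 0\<close> middle_binomial_pos by (intro mult_left_le) simp_all
  also have "\<dots> \<le> 2 * 2 ^ d / middle_binomial"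
    using \<open>D \<le> 2 * 2 ^ d\<close> middle_binomial_pos by (simp add: divide_right_mono)
  also have "\<dots> \<le> 12 * sqrt (real d)"
  proof (rule real_le_rsqrt[THEN order_trans])
    have "(2 * 2 ^ d / middle_binomial)\<^sup>2 = 4 * ((2 ^ d)\<^sup>2 / middle_binomial\<^sup>2)"
      by (simp add: power_divide power_mult_distrib)
    also have "\<dots> \<le> 4 * (32 * real d)"
      using two_power_sq_le_middle_binomial[OF d] middle_binomial_pos by (simp add: divide_le_eq)
    finally show "(2 * 2 ^ d / middle_binomial)\<^sup>2 \<le> 144 * real d"
      by simp
    show "sqrt (144 * real d) \<le> 12 * sqrt (real d)"
      by (simp add: real_sqrt_mult)
  qed
  finally show ?thesis .
qed

end

section \<open>Concentration of the coordinate means\<close>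

lemma coord_mean_deviation_bound:
  fixes p :: "nat \<Rightarrow> (nat \<Rightarrow> real) pmf" and x :: "nat \<Rightarrow> nat \<Rightarrow> real"
  assumes "N \<ge> 1" "B > 0" "t \<ge> 0"
    and mean: "\<And>i. i < N \<Longrightarrow> measure_pmf.expectation (p i) (\<lambda>y. y j) = x i j"
    and bounded: "\<And>i y. i < N \<Longrightarrow> y \<in> set_pmf (p i) \<Longrightarrow> \<bar>y j\<bar> \<le> B"
  shows "measure_pmf.prob (Pi_pmf {0..<N} dflt p) {xs. t \<le> \<bar>coord_mean N xs j - coord_mean N x j\<bar>}
           \<le> 2 * exp (- (real N * t\<^sup>2) / (2 * B\<^sup>2))"
proof -
  define P where "P = Pi_pmf {0..<N} dflt p"
  have component: "map_pmf (\<lambda>xs. xs i) P = p i" if "i < N" for i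
    using that by (simp add: P_def Pi_pmf_component)
  interpret hoeffding: Hoeffding_ineq "measure_pmf P" "{0..<N}" "\<lambda>i xs. xs i j" "\<lambda>_. -B" "\<lambda>_. B"
    "\<Sum>i\<in>{0..<N}. x i j"
  proof unfold_locales
    show "prob_space.indep_vars (measure_pmf P) (\<lambda>_. borel) (\<lambda>i xs. xs i j) {0..<N}"
      unfolding P_def
      by (intro prob_space.indep_vars_compose2[OF _ indep_vars_Pi_pmf, where Y = "\<lambda>i y. y j"])
        (auto simp: measure_pmf.prob_space_axioms)
  next
    fix i assume "i \<in> {0..<N}"
    then have i: "i < N"
      by simp
    show "AE xs in measure_pmf P. xs i j \<in> {- B..B}"
    proof (rule AE_pmfI)
      fix xs assume "xs \<in> set_pmf P"
      then have "xs i \<in> set_pmf (p i)"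
        using component[OF i] by (metis pmf.set_map imageI)
      then have "\<bar>xs i j\<bar> \<le> B"
        by (rule bounded[OF i])
      then show "xs i j \<in> {- B..B}"
        by (auto simp: abs_le_iff)
    qed
  next
    have "measure_pmf.expectation P (\<lambda>xs. xs i j) = x i j" if "i < N" for i
    proof -
      have "measure_pmf.expectation P (\<lambda>xs. xs i j)
          = measure_pmf.expectation (map_pmf (\<lambda>xs. xs i) P) (\<lambda>y. y j)"
        by simp
      then show ?thesis
        by (simp add: component[OF that] mean[OF that])
    qed
    then show "(\<Sum>i\<in>{0..<N}. x i j) \<equiv> (\<Sum>i\<in>{0..<N}. measure_pmf.expectation P (\<lambda>xs. xs i j))"
      by (intro eq_reflection sum.cong) auto
  qed simp
  have "{xs \<in> space (measure_pmf P). real N * t \<le> \<bar>(\<Sum>i\<in>{0..<N}. xs i j) - (\<Sum>i\<in>{0..<N}. x i j)\<bar>}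
      = {xs. t \<le> \<bar>coord_mean N xs j - coord_mean N x j\<bar>}"
  proof -
    have "\<bar>coord_mean N xs j - coord_mean N x j\<bar>
        = \<bar>(\<Sum>i\<in>{0..<N}. xs i j) - (\<Sum>i\<in>{0..<N}. x i j)\<bar> / real N" for xs :: "nat \<Rightarrow> nat \<Rightarrow> real"
      using assms(1) by (simp add: coord_mean_def atLeast0LessThan diff_divide_distrib[symmetric])
    then show ?thesis
      using assms(1) by (auto simp: le_divide_eq mult.commute)
  qed
  moreover have "measure_pmf.prob P {xs \<in> space (measure_pmf P).
        real N * t \<le> \<bar>(\<Sum>i\<in>{0..<N}. xs i j) - (\<Sum>i\<in>{0..<N}. x i j)\<bar>}
      \<le> 2 * exp (- 2 * (real N * t)\<^sup>2 / (\<Sum>i\<in>{0..<N}. (B - - B)\<^sup>2))"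
    using assms by (intro hoeffding.Hoeffding_ineq_abs_ge) simp_all
  moreover have "- 2 * (real N * t)\<^sup>2 / (\<Sum>i\<in>{0..<N}. (B - - B)\<^sup>2) = - (real N * t\<^sup>2) / (2 * B\<^sup>2)"
    using assms by (simp add: power2_eq_square field_simps)
  ultimately show ?thesis
    by (simp add: P_def)
qed

lemma mechanism1_coord_deviation_bound:
  fixes x :: "nat \<Rightarrow> nat \<Rightarrow> real"
  assumes "d \<ge> 1" "N \<ge> 1" "0 < \<epsilon>" "\<epsilon> \<le> 1" "0 \<le> \<delta>" "C_const d * \<delta> < 1" "j < d" "t \<ge> 0"
    and data: "\<forall>i<N. \<forall>j<d. -1 \<le> x i j \<and> x i j \<le> 1"
  shows "measure_pmf.prob (mechanism1_all d N \<epsilon> \<delta> x) {xs. t \<le> \<bar>coord_mean N xs j - coord_mean N x j\<bar>}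
           \<le> 2 * exp (- (real N * t\<^sup>2 * (\<epsilon> + 2 ^ d * \<delta>)\<^sup>2) / (288 * real d))"
proof -
  define B where "B = B_param d \<epsilon> \<delta>"
  define W where "W = \<epsilon> + 2 ^ d * \<delta>"
  have B: "B > 0"
    using B_param_pos[OF assms(1,3,5,6)] by (simp add: B_def)
  have "0 < W"
    using assms(3,5) by (simp add: W_def add_pos_nonneg)
  have "measure_pmf.prob (mechanism1_all d N \<epsilon> \<delta> x) {xs. t \<le> \<bar>coord_mean N xs j - coord_mean N x j\<bar>}
      \<le> 2 * exp (- (real N * t\<^sup>2) / (2 * B\<^sup>2))"
    unfolding mechanism1_all_def
  proof (rule coord_mean_deviation_bound[OF assms(2) B assms(8)])
    fix i assume "i < N"
    then show "measure_pmf.expectation (mechanism1 d \<epsilon> \<delta> (x i)) (\<lambda>y. y j) = x i j"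
      using assms data alpha_param_nonneg alpha_param_le_one
      by (simp add: mechanism1_def expectation_mech B_param_pos mech_gain_mechanism1)
    fix y assume "y \<in> set_pmf (mechanism1 d \<epsilon> \<delta> (x i))"
    then have "y \<in> cube d B"
      using set_pmf_mech[OF assms(1) B] by (auto simp: mechanism1_def B_def)
    then have "y j \<in> {-B, B}"
      using assms(7) by (auto simp: cube_def PiE_iff)
    then show "\<bar>y j\<bar> \<le> B"
      using B by auto
  qed
  also have "\<dots> \<le> 2 * exp (- (real N * t\<^sup>2 * W\<^sup>2) / (288 * real d))"
  proof -
    have "(B * W)\<^sup>2 \<le> (12 * sqrt (real d))\<^sup>2"
      using B_param_bound[OF assms(1,3,5,6,4)] B assms(3,5)
      by (intro power_mono) (simp_all add: B_def W_def)
    then have "2 * B\<^sup>2 \<le> 288 * real d / W\<^sup>2"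
      using \<open>0 < W\<close> by (simp add: le_divide_eq power_mult_distrib)
    then have "real N * t\<^sup>2 / (288 * real d / W\<^sup>2) \<le> real N * t\<^sup>2 / (2 * B\<^sup>2)"
      using B assms(1) \<open>0 < W\<close> by (intro divide_left_mono) simp_all
    then show ?thesis
      by simp
  qed
  finally show ?thesis
    by (simp add: W_def)
qed

lemma prob_Max_le_union_bound:
  fixes p :: "'a pmf" and f :: "'a \<Rightarrow> nat \<Rightarrow> real"
  assumes "d \<ge> 1" and tail: "\<And>j. j < d \<Longrightarrow> measure_pmf.prob p {\<omega>. R \<le> f \<omega> j} \<le> q"
  shows "1 - real d * q \<le> measure_pmf.prob p {\<omega>. Max (f \<omega> ` {0..<d}) \<le> R}"
proof -
  have "- {\<omega>. Max (f \<omega> ` {0..<d}) \<le> R} \<subseteq> (\<Union>j<d. {\<omega>. R \<le> f \<omega> j})"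
  proof
    fix \<omega> assume "\<omega> \<in> - {\<omega>. Max (f \<omega> ` {0..<d}) \<le> R}"
    then obtain j where "j < d" "R < f \<omega> j"
      using assms(1) by (auto simp: not_le)
    then show "\<omega> \<in> (\<Union>j<d. {\<omega>. R \<le> f \<omega> j})"
      by (blast intro: less_imp_le)
  qed
  then have "measure_pmf.prob p (- {\<omega>. Max (f \<omega> ` {0..<d}) \<le> R}) \<le> (\<Sum>j<d. measure_pmf.prob p {\<omega>. R \<le> f \<omega> j})"
    by (intro order_trans[OF measure_pmf.finite_measure_mono measure_pmf.finite_measure_subadditive_finite]) auto
  also have "\<dots> \<le> real d * q"
    using sum_mono[of "{..<d}", OF tail] by simp
  finally show ?thesis
    using measure_pmf.prob_compl[of "{\<omega>. Max (f \<omega> ` {0..<d}) \<le> R}" p] by (simp add: Compl_eq_Diff_UNIV)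
qed

section \<open>The accuracy of Mechanism-1\<close>

lemma mechanism1_coord_tail:
  fixes x :: "nat \<Rightarrow> nat \<Rightarrow> real"
  assumes d: "d \<ge> 1" and N: "N \<ge> 1" and \<epsilon>: "0 < \<epsilon>" "\<epsilon> \<le> 1" and \<delta>: "0 \<le> \<delta>" "C_const d * \<delta> < 1"
    and \<beta>: "0 < \<beta>" "\<beta> \<le> 1/2" and "j < d" and data: "\<forall>i<N. \<forall>j<d. -1 \<le> x i j \<and> x i j \<le> 1"
  shows "measure_pmf.prob (mechanism1_all d N \<epsilon> \<delta> x)
           {xs. 24 * sqrt (real d * ln (real d / \<beta>)) / ((\<epsilon> + 2 ^ d * \<delta>) * sqrt (real N))
                  \<le> \<bar>coord_mean N xs j - coord_mean N x j\<bar>}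
         \<le> \<beta> / real d"
proof -
  define W where "W = \<epsilon> + 2 ^ d * \<delta>"
  define L where "L = ln (real d / \<beta>)"
  define R where "R = 24 * sqrt (real d * L) / (W * sqrt (real N))"
  have "2 \<le> real d / \<beta>"
    using d \<beta> by (simp add: le_divide_eq)
  then have L: "0 < L"
    by (simp add: L_def)
  have W: "0 < W"
    using \<epsilon> \<delta> by (simp add: W_def add_pos_nonneg)
  have "- (real N * R\<^sup>2 * W\<^sup>2) / (288 * real d) = - (2 * L)"
    using N d W L by (simp add: R_def power_divide power_mult_distrib real_sqrt_mult)
  moreover have "2 * L = ln ((real d / \<beta>)\<^sup>2)"
    using d \<beta> by (simp add: L_def ln_realpow)
  moreover have "0 \<le> R"
    using W L by (simp add: R_def)
  ultimately have "measure_pmf.prob (mechanism1_all d N \<epsilon> \<delta> x)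
      {xs. R \<le> \<bar>coord_mean N xs j - coord_mean N x j\<bar>} \<le> 2 * (\<beta> / real d)\<^sup>2"
    using mechanism1_coord_deviation_bound[OF d N \<epsilon> \<delta> \<open>j < d\<close> _ data, of R] d \<beta>
    unfolding W_def by (simp add: exp_minus power_divide)
  also have "2 * (\<beta> / real d)\<^sup>2 \<le> \<beta> / real d"
    using d \<beta> by (simp add: power2_eq_square field_simps)
  finally show ?thesis
    by (simp add: R_def W_def L_def)
qed

theorem theorem1:
  "\<exists>K>0. \<forall>(d::nat) (N::nat) (\<epsilon>::real) (\<delta>::real) (\<beta>::real) (x::nat \<Rightarrow> nat \<Rightarrow> real).
     d \<ge> 1 \<longrightarrow> N \<ge> 1 \<longrightarrow> 0 < \<epsilon> \<longrightarrow> \<epsilon> \<le> 1 \<longrightarrow> 0 \<le> \<delta> \<longrightarrow> C_const d * \<delta> < 1 \<longrightarrow>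
     0 < \<beta> \<longrightarrow> \<beta> \<le> 1/2 \<longrightarrow> real N \<ge> ln (2 * real d / \<beta>) \<longrightarrow>
     (\<forall>i<N. \<forall>j<d. -1 \<le> x i j \<and> x i j \<le> 1) \<longrightarrow>
     measure_pmf.prob (mechanism1_all d N \<epsilon> \<delta> x)
       {xs. Max ((\<lambda>j. \<bar>coord_mean N xs j - coord_mean N x j\<bar>) ` {0..<d})
            \<le> K * sqrt (real d * ln (real d / \<beta>)) / ((\<epsilon> + 2 ^ d * \<delta>) * sqrt (real N))}
       \<ge> 1 - \<beta>"
proof (intro exI[of _ 24] conjI allI impI)
  fix d N :: nat and \<epsilon> \<delta> \<beta> :: real and x :: "nat \<Rightarrow> nat \<Rightarrow> real"
  assume d: "d \<ge> 1" and N: "N \<ge> 1" and \<epsilon>: "0 < \<epsilon>" "\<epsilon> \<le> 1" and \<delta>: "0 \<le> \<delta>" "C_const d * \<delta> < 1"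
    and \<beta>: "0 < \<beta>" "\<beta> \<le> 1/2" and data: "\<forall>i<N. \<forall>j<d. -1 \<le> x i j \<and> x i j \<le> 1"
  have "1 - real d * (\<beta> / real d) \<le> measure_pmf.prob (mechanism1_all d N \<epsilon> \<delta> x)
       {xs. Max ((\<lambda>j. \<bar>coord_mean N xs j - coord_mean N x j\<bar>) ` {0..<d})
            \<le> 24 * sqrt (real d * ln (real d / \<beta>)) / ((\<epsilon> + 2 ^ d * \<delta>) * sqrt (real N))}"
    using mechanism1_coord_tail[OF d N \<epsilon> \<delta> \<beta> _ data] by (intro prob_Max_le_union_bound[OF d])
  then show "measure_pmf.prob (mechanism1_all d N \<epsilon> \<delta> x)
       {xs. Max ((\<lambda>j. \<bar>coord_mean N xs j - coord_mean N x j\<bar>) ` {0..<d})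
            \<le> 24 * sqrt (real d * ln (real d / \<beta>)) / ((\<epsilon> + 2 ^ d * \<delta>) * sqrt (real N))}
       \<ge> 1 - \<beta>"
    using d by simp
qed simp

end
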